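(* Let $c\colon G\to G_0$ be a collapse of finite connected graphs. Then $F_G\circ c^*=F_{G_0}$ on $\mathcal M(G_0)$, i.e. $F_G(c^*(\ell))=F_{G_0}(\ell)$ for all $\ell\in\mathcal M(G_0)$.
   Context: A graph has oriented edge set $E$ with maps $o,\tau$ to the vertex set, a fixed-point-free involution $e\mapsto\bar e$ with $o(\bar e)=\tau(e)$, and orientation $E_+$. $\mathcal M(G)=\mathbb R_{>0}^{|E_+|}$ is the set of length functions, extended to $E$ by $\ell(\bar e)=\ell(e)$. For any $f\in\mathbb R^{|E_+|}$ (extended symmetrically), $A_{G,f}(e,e')=A_G(e,e')\exp(-f(e))$ where $A_G(e,e')=1$ if $\tau(e)=o(e')$ and $e'\ne\bar e$ and $0$ otherwise, and $F_G(f)=\det(I-A_{G,f})$, which is defined on all of $\mathbb R^{|E_+|}$. A collapse $c\colon G\to G_0$ is a surjection such that each edge of $G$ maps to a vertex or to an edge of $G_0$ and $c^{-1}(x)$ is a contractible subgraph for every point $x$ of $G_0$. The map $c^*\colon\mathcal M(G_0)\to\mathbb R_{\ge0}^{|E_+|}$ is $c^*(\ell)(e)=\ell(c(e))$ if $c(e)$ is an edge and $c^*(\ell)(e)=0$ otherwise. *)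

theory Defs
  imports Complex_Main "HOL-Combinatorics.Permutations"
begin

text \<open>Serre-style graphs: vertex set, oriented edge set, origin/terminus maps
 and a fixed-point-free edge-reversing involution.\<close>

record ('v, 'e) sgraph =
  verts :: "'v set"
  edges :: "'e set"
  org   :: "'e \<Rightarrow> 'v"
  tgt   :: "'e \<Rightarrow> 'v"
  rev   :: "'e \<Rightarrow> 'e"

definition sgraph :: "('v, 'e) sgraph \<Rightarrow> bool" where
  "sgraph G \<longleftrightarrow>
     (\<forall>e\<in>edges G. org G e \<in> verts G \<and> tgt G e \<in> verts G \<and> rev G e \<in> edges G
        \<and> rev G (rev G e) = e \<and> rev G e \<noteq> e \<and> org G (rev G e) = tgt G e)"

definition finite_sgraph :: "('v, 'e) sgraph \<Rightarrow> bool" where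
  "finite_sgraph G \<longleftrightarrow> sgraph G \<and> finite (verts G) \<and> finite (edges G)"

fun walk :: "('v, 'e) sgraph \<Rightarrow> 'v \<Rightarrow> 'e list \<Rightarrow> 'v \<Rightarrow> bool" where
  "walk G u [] v \<longleftrightarrow> u = v \<and> u \<in> verts G"
| "walk G u (e # es) v \<longleftrightarrow> e \<in> edges G \<and> org G e = u \<and> walk G (tgt G e) es v"

definition reduced :: "('v, 'e) sgraph \<Rightarrow> 'e list \<Rightarrow> bool" where
  "reduced G es \<longleftrightarrow> (\<forall>i. Suc i < length es \<longrightarrow> es ! Suc i \<noteq> rev G (es ! i))"

definition connected_sgraph :: "('v, 'e) sgraph \<Rightarrow> bool" where
  "connected_sgraph G \<longleftrightarrow> verts G \<noteq> {} \<and> (\<forall>u\<in>verts G. \<forall>v\<in>verts G. \<exists>es. walk G u es v)"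

text \<open>Contractible (sub)graph = tree: nonempty, connected, no circuit
 (no nonempty reduced closed edge path).\<close>
definition tree :: "('v, 'e) sgraph \<Rightarrow> bool" where
  "tree G \<longleftrightarrow> connected_sgraph G \<and> \<not> (\<exists>v es. es \<noteq> [] \<and> walk G v es v \<and> reduced G es)"

text \<open>A collapse c : G \<rightarrow> G0 is given by its vertex map cV and its edge map cE,
 which sends each edge either to a vertex (Inl) or to an edge (Inr) of G0.\<close>
definition fiber :: "('v, 'e) sgraph \<Rightarrow> ('v \<Rightarrow> 'w) \<Rightarrow> ('e \<Rightarrow> 'w + 'f) \<Rightarrow> 'w \<Rightarrow> ('v, 'e) sgraph" where
  "fiber G cV cE w = \<lparr>verts = {v\<in>verts G. cV v = w}, edges = {e\<in>edges G. cE e = Inl w},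
                      org = org G, tgt = tgt G, rev = rev G\<rparr>"

definition collapse ::
  "('v, 'e) sgraph \<Rightarrow> ('w, 'f) sgraph \<Rightarrow> ('v \<Rightarrow> 'w) \<Rightarrow> ('e \<Rightarrow> 'w + 'f) \<Rightarrow> bool" where
  "collapse G G0 cV cE \<longleftrightarrow>
     (\<forall>v\<in>verts G. cV v \<in> verts G0) \<and>
     (\<forall>e\<in>edges G. (case cE e of
         Inl w \<Rightarrow> w \<in> verts G0 \<and> cV (org G e) = w \<and> cV (tgt G e) = w \<and> cE (rev G e) = Inl w
       | Inr f \<Rightarrow> f \<in> edges G0 \<and> cV (org G e) = org G0 f \<and> cV (tgt G e) = tgt G0 f
                   \<and> cE (rev G e) = Inr (rev G0 f))) \<and>
     (\<forall>f\<in>edges G0. \<exists>!e. e \<in> edges G \<and> cE e = Inr f) \<and>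
     (\<forall>w\<in>verts G0. tree (fiber G cV cE w))"

definition set_det :: "'a set \<Rightarrow> ('a \<Rightarrow> 'a \<Rightarrow> real) \<Rightarrow> real" where
  "set_det S M = (\<Sum>p | p permutes S. of_int (sign p) * (\<Prod>e\<in>S. M e (p e)))"

definition edge_matrix :: "('v, 'e) sgraph \<Rightarrow> ('e \<Rightarrow> real) \<Rightarrow> 'e \<Rightarrow> 'e \<Rightarrow> real" where
  "edge_matrix G f e e' = (if tgt G e = org G e' \<and> e' \<noteq> rev G e then exp (- f e) else 0)"

definition F_graph :: "('v, 'e) sgraph \<Rightarrow> ('e \<Rightarrow> real) \<Rightarrow> real" where
  "F_graph G f = set_det (edges G) (\<lambda>e e'. (if e = e' then 1 else 0) - edge_matrix G f e e')"

definition cstar :: "('e \<Rightarrow> 'w + 'f) \<Rightarrow> ('f \<Rightarrow> real) \<Rightarrow> 'e \<Rightarrow> real" where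
  "cstar cE l e = (case cE e of Inl _ \<Rightarrow> 0 | Inr f \<Rightarrow> l f)"

end

theory Submission
  imports Defs
begin

text \<open>Contracting an edge t with distinct endpoints and zero weight in both directions
  does not change F: the rows of rev t and of t in I - A have diagonal entry 1, and
  pivoting on them turns det (I - A) into the same determinant for the contracted graph.
  The fibers of a collapse are finite trees, so while some edge is collapsed some fiber
  has a terminal edge, and contracting it leaves a collapse onto the same G0 with fewer
  collapsed edges. A collapse without collapsed edges is an isomorphism of graphs, which
  leaves F unchanged.\<close>

section \<open>Determinants of matrices indexed by a finite set\<close>

lemma set_det_cong:
  assumes "\<And>e e'. e \<in> S \<Longrightarrow> e' \<in> S \<Longrightarrow> M e e' = N e e'"
  shows "set_det S M = set_det S N"
  unfolding set_det_def
  by (intro sum.cong refl arg_cong[where f = "\<lambda>x. _ * x"] prod.cong)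
     (auto simp: assms permutes_in_image)

lemma set_det_identical_rows:
  assumes fin: "finite S" and r: "r \<in> S" and k: "k \<in> S" and rk: "r \<noteq> k"
    and eq: "\<And>j. M r j = M k j"
  shows "set_det S M = 0"
proof -
  let ?t = "Transposition.transpose r k"
  let ?g = "\<lambda>p. of_int (sign p) * (\<Prod>e\<in>S. M e (p e))"
  have t: "?t permutes S" using r k by (simp add: permutes_swap_id)
  have tt: "p \<circ> ?t \<circ> ?t = p" for p :: "'a \<Rightarrow> 'a" by (simp add: fun_eq_iff)
  have reindex: "sum ?g {p. p permutes S} = sum (\<lambda>p. ?g (p \<circ> ?t)) {p. p permutes S}"
    by (rule sum.reindex_bij_witness[of _ "\<lambda>p. p \<circ> ?t" "\<lambda>p. p \<circ> ?t"])
       (auto simp: tt intro: permutes_compose[OF t])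
  have swap: "?g (p \<circ> ?t) = - ?g p" if p: "p permutes S" for p
  proof -
    have "sign (p \<circ> ?t) = - sign p"
      using rk sign_compose[OF permutes_imp_permutation[OF fin p] permutes_imp_permutation[OF fin t]]
      by (simp add: sign_swap_id)
    moreover have "(\<Prod>e\<in>S. M e ((p \<circ> ?t) e)) = (\<Prod>e\<in>S. M (?t e) (p e))"
      by (rule prod.reindex_bij_witness[of _ ?t ?t]) (use r k in \<open>auto simp: Transposition.transpose_def\<close>)
    moreover have "\<dots> = (\<Prod>e\<in>S. M e (p e))"
      by (rule prod.cong) (auto simp: Transposition.transpose_def eq)
    ultimately show ?thesis by simp
  qed
  have "sum ?g {p. p permutes S} = - sum ?g {p. p permutes S}"
    using reindex swap by (simp add: sum_negf)
  then show ?thesis unfolding set_det_def by linarith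
qed

lemma set_det_row_add:
  assumes fin: "finite S" and r: "r \<in> S" and k: "k \<in> S" and rk: "r \<noteq> k"
  shows "set_det S (M(k := \<lambda>j. M k j + a * M r j)) = set_det S M"
proof -
  have upd: "(\<Prod>e\<in>S. (M(k := row)) e (p e)) = row (p k) * (\<Prod>e\<in>S-{k}. M e (p e))" for row p
    by (subst prod.remove[OF fin k]) (auto intro!: prod.cong)
  have "(\<Prod>e\<in>S. M e (p e)) = M k (p k) * (\<Prod>e\<in>S-{k}. M e (p e))" for p
    by (subst prod.remove[OF fin k]) simp
  then have "(\<Prod>e\<in>S. (M(k := \<lambda>j. M k j + a * M r j)) e (p e))
      = (\<Prod>e\<in>S. M e (p e)) + a * (\<Prod>e\<in>S. (M(k := M r)) e (p e))" for p
    unfolding upd by (simp add: algebra_simps)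
  then have "set_det S (M(k := \<lambda>j. M k j + a * M r j)) = set_det S M + a * set_det S (M(k := M r))"
    unfolding set_det_def by (simp add: sum.distrib sum_distrib_left algebra_simps)
  moreover have "set_det S (M(k := M r)) = 0"
    by (rule set_det_identical_rows[OF fin r k rk]) (simp add: rk)
  ultimately show ?thesis by simp
qed

lemma set_det_rows_add:
  assumes fin: "finite S" and r: "r \<in> S" and K: "K \<subseteq> S" "r \<notin> K"
  shows "set_det S (\<lambda>e j. if e \<in> K then M e j + c e * M r j else M e j) = set_det S M"
proof -
  have "finite K" using K fin finite_subset by blast
  then show ?thesis using K
  proof (induction K rule: finite_induct)
    case (insert k K)
    define N where "N = (\<lambda>e j. if e \<in> K then M e j + c e * M r j else M e j)"
    have "(\<lambda>e j. if e \<in> insert k K then M e j + c e * M r j else M e j)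
        = N(k := \<lambda>j. N k j + c k * N r j)"
      using insert by (auto simp: N_def fun_eq_iff)
    moreover have "set_det S (N(k := \<lambda>j. N k j + c k * N r j)) = set_det S N"
      by (rule set_det_row_add) (use fin r insert in auto)
    ultimately show ?case using insert by (simp add: N_def)
  qed simp
qed

lemma set_det_unit_col:
  assumes fin: "finite S" and c: "c \<in> S"
    and col: "\<And>e. e \<in> S \<Longrightarrow> M e c = (if e = c then 1 else 0)"
  shows "set_det S M = set_det (S - {c}) M"
proof -
  let ?g = "\<lambda>p. of_int (sign p) * (\<Prod>e\<in>S. M e (p e))"
  have "sum ?g {p. p permutes S} = sum ?g {p. p permutes (S - {c})}"
  proof (rule sum.mono_neutral_right)
    show "finite {p. p permutes S}" using fin by (rule finite_permutations)
    show "{p. p permutes (S - {c})} \<subseteq> {p. p permutes S}" by (auto intro: permutes_subset)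
    show "\<forall>p\<in>{p. p permutes S} - {p. p permutes (S - {c})}. ?g p = 0"
    proof
      fix p assume "p \<in> {p. p permutes S} - {p. p permutes (S - {c})}"
      then have p: "p permutes S" and "\<not> p permutes (S - {c})" by auto
      then have "p c \<noteq> c" using permutes_superset[of p S "S - {c}"] by auto
      moreover have "p (inv p c) = c" "inv p c \<in> S"
        using permutes_inverses(1)[OF p] permutes_in_image[OF permutes_inv[OF p]] c by auto
      ultimately have "M (inv p c) (p (inv p c)) = 0" using col by force
      then have "(\<Prod>e\<in>S. M e (p e)) = 0" using fin \<open>inv p c \<in> S\<close> by (meson prod_zero)
      then show "?g p = 0" by simp
    qed
  qed
  also have "\<dots> = sum (\<lambda>p. of_int (sign p) * (\<Prod>e\<in>S - {c}. M e (p e))) {p. p permutes (S - {c})}"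
  proof (rule sum.cong[OF refl])
    fix p assume "p \<in> {p. p permutes (S - {c})}"
    then have "p c = c" by (simp add: permutes_not_in)
    then show "?g p = of_int (sign p) * (\<Prod>e\<in>S - {c}. M e (p e))"
      by (subst prod.remove[OF fin c]) (simp add: col[OF c])
  qed
  finally show ?thesis unfolding set_det_def .
qed

lemma set_det_pivot:
  assumes fin: "finite S" and c: "c \<in> S" and pivot: "M c c = 1"
  shows "set_det S M = set_det (S - {c}) (\<lambda>e j. M e j - M e c * M c j)"
proof -
  let ?N = "\<lambda>e j. if e \<in> S - {c} then M e j + (- M e c) * M c j else M e j"
  have "set_det S M = set_det S ?N"
    by (rule set_det_rows_add[symmetric]) (use fin c in auto)
  also have "\<dots> = set_det (S - {c}) ?N"
    by (rule set_det_unit_col) (use fin c pivot in auto)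
  also have "\<dots> = set_det (S - {c}) (\<lambda>e j. M e j - M e c * M c j)"
    by (rule set_det_cong) auto
  finally show ?thesis .
qed

lemma set_det_reindex:
  assumes fin: "finite S" and h: "bij_betw h S S'"
    and M: "\<And>e e'. e \<in> S \<Longrightarrow> e' \<in> S \<Longrightarrow> M e e' = M' (h e) (h e')"
  shows "set_det S M = set_det S' M'"
proof -
  let ?phi = "\<lambda>p x. if x \<in> S' then h (p (inv_into S h x)) else x"
  let ?g = "\<lambda>q. of_int (sign q) * (\<Prod>e\<in>S'. M' e (q e))"
  have "set_det S' M' = sum (\<lambda>p. ?g (?phi p)) {p. p permutes S}"
    unfolding set_det_def by (rule sum.reindex_bij_betw[OF bij_betw_permutations[OF h], symmetric])
  also have "\<dots> = set_det S M"
    unfolding set_det_def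
  proof (rule sum.cong[OF refl])
    fix p assume "p \<in> {p. p permutes S}"
    then have p: "p permutes S" by simp
    interpret pb: permutes_bij_finite p S S' h "inv_into S h" "?phi p"
      by unfold_locales (use p h fin in \<open>auto simp: bij_betw_inv_into_left\<close>)
    have "(\<Prod>e\<in>S'. M' e (?phi p e)) = (\<Prod>e\<in>S. M' (h e) (?phi p (h e)))"
      by (rule prod.reindex_bij_betw[OF h, symmetric])
    also have "\<dots> = (\<Prod>e\<in>S. M e (p e))"
    proof (rule prod.cong[OF refl])
      fix e assume e: "e \<in> S"
      then have "h e \<in> S'" "p e \<in> S" using h p by (auto dest: bij_betwE simp: permutes_in_image)
      then show "M' (h e) (?phi p (h e)) = M e (p e)"
        using M[OF e] e h by (simp add: bij_betw_inv_into_left)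
    qed
    finally show "?g (?phi p) = of_int (sign p) * (\<Prod>e\<in>S. M e (p e))" by (simp add: pb.sign_p')
  qed
  finally show ?thesis by simp
qed

section \<open>Walks, subgraphs and trees\<close>

lemma sgraph_edgeD:
  assumes "sgraph G" "e \<in> edges G"
  shows "org G e \<in> verts G" "tgt G e \<in> verts G" "rev G e \<in> edges G" "rev G (rev G e) = e"
    "rev G e \<noteq> e" "org G (rev G e) = tgt G e" "tgt G (rev G e) = org G e"
  using assms unfolding sgraph_def by metis+

lemma sgraph_rev_eq_iff:
  assumes "sgraph G" "a \<in> edges G" "b \<in> edges G"
  shows "rev G a = rev G b \<longleftrightarrow> a = b"
  using assms sgraph_edgeD(4) by metis

lemma walk_source_in_verts: "sgraph G \<Longrightarrow> walk G u es w \<Longrightarrow> u \<in> verts G"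
  by (cases es) (auto simp: sgraph_def)

lemma walk_edges_subset: "walk G u es w \<Longrightarrow> set es \<subseteq> edges G"
  by (induction es arbitrary: u) auto

lemma walk_append_iff:
  assumes "sgraph G"
  shows "walk G u (xs @ ys) w \<longleftrightarrow> (\<exists>m. walk G u xs m \<and> walk G m ys w)"
  by (induction xs arbitrary: u) (use walk_source_in_verts[OF assms] in auto)

lemma reduced_drop_take: "reduced G es \<Longrightarrow> reduced G (drop i (take j es))"
  unfolding reduced_def by (auto simp: min_def)

lemma reduced_snoc:
  assumes "reduced G es" "es \<noteq> []" "e \<noteq> rev G (last es)"
  shows "reduced G (es @ [e])"
  unfolding reduced_def
proof (intro allI impI)
  fix i assume i: "Suc i < length (es @ [e])"
  show "(es @ [e]) ! Suc i \<noteq> rev G ((es @ [e]) ! i)"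
  proof (cases "Suc i < length es")
    case True
    then show ?thesis using assms(1) unfolding reduced_def by (simp add: nth_append)
  next
    case False
    then have "i = length es - 1" using i by simp
    then show ?thesis using assms(2,3) by (simp add: nth_append last_conv_nth)
  qed
qed

definition subgraph :: "('v, 'e) sgraph \<Rightarrow> ('v, 'e) sgraph \<Rightarrow> bool" where
  "subgraph H' H \<longleftrightarrow> verts H' \<subseteq> verts H \<and>
     (\<forall>e\<in>edges H'. e \<in> edges H \<and> org H' e = org H e \<and> tgt H' e = tgt H e \<and> rev H' e = rev H e)"

lemma walk_subgraph: "subgraph H' H \<Longrightarrow> walk H' u es w \<Longrightarrow> walk H u es w"
  by (induction es arbitrary: u) (auto simp: subgraph_def)

lemma walk_in_subgraph:
  "subgraph H' H \<Longrightarrow> walk H u es w \<Longrightarrow> set es \<subseteq> edges H' \<Longrightarrow> w \<in> verts H' \<Longrightarrow> walk H' u es w"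
  by (induction es arbitrary: u) (auto simp: subgraph_def)

lemma reduced_subgraph:
  assumes "subgraph H' H" "set es \<subseteq> edges H'" "reduced H' es"
  shows "reduced H es"
  using assms unfolding subgraph_def reduced_def by (metis Suc_lessD nth_mem subsetD)

lemma tree_subgraph:
  assumes sub: "subgraph H' H" and tr: "tree H" and con: "connected_sgraph H'"
  shows "tree H'"
proof -
  have "\<not> (es \<noteq> [] \<and> walk H' v es v \<and> reduced H' es)" for v es
  proof
    assume "es \<noteq> [] \<and> walk H' v es v \<and> reduced H' es"
    then have "es \<noteq> []" "walk H v es v" "reduced H es"
      using walk_subgraph[OF sub] reduced_subgraph[OF sub walk_edges_subset] by auto
    then show False using tr unfolding tree_def by blast
  qed
  then show ?thesis using con unfolding tree_def by blast
qed

lemma tree_mutual_subgraph: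
  assumes sub: "subgraph H' H" "subgraph H H'" and tr: "tree H"
  shows "tree H'"
proof (rule tree_subgraph[OF sub(1) tr])
  have V: "verts H' = verts H" using sub by (auto simp: subgraph_def)
  have con: "connected_sgraph H" using tr by (simp add: tree_def)
  have "\<exists>es. walk H' a es b" if "a \<in> verts H'" "b \<in> verts H'" for a b
  proof -
    have "a \<in> verts H" "b \<in> verts H" using that V by auto
    then obtain es where "walk H a es b" using con unfolding connected_sgraph_def by blast
    then show ?thesis using walk_subgraph[OF sub(2)] by blast
  qed
  moreover have "verts H' \<noteq> {}" using V con by (simp add: connected_sgraph_def)
  ultimately show "connected_sgraph H'" unfolding connected_sgraph_def by blast
qed

text \<open>The segment between two occurrences of an edge would be a circuit.\<close>
lemma tree_reduced_walk_distinct: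
  assumes sg: "sgraph H" and tr: "tree H" and w: "walk H a es b" and r: "reduced H es"
  shows "distinct es"
proof (rule ccontr)
  assume "\<not> distinct es"
  then obtain i j where ij: "i < j" "j < length es" "es ! i = es ! j"
    by (metis distinct_conv_nth linorder_neqE_nat)
  have "take i es @ drop i (take j es) = take j es"
    using ij(1) by (metis append_take_drop_id less_imp_le_nat min.absorb1 take_take)
  then have "es = take i es @ drop i (take j es) @ drop j es"
    by (metis append.assoc append_take_drop_id)
  then obtain m1 m2 where w2: "walk H m1 (drop i (take j es)) m2" and w3: "walk H m2 (drop j es) b"
    using w walk_append_iff[OF sg] by metis
  have loop: "drop i (take j es) = es ! i # drop (Suc i) (take j es)"
    using ij(1,2) by (metis Cons_nth_drop_Suc length_take min.absorb4 nth_take)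
  have "drop j es = es ! j # drop (Suc j) es" using ij(2) by (simp add: Cons_nth_drop_Suc)
  then have "m2 = org H (es ! j)" using w3 by simp
  moreover have "m1 = org H (es ! i)" using w2 loop by (metis walk.simps(2))
  ultimately have "walk H m1 (drop i (take j es)) m1" using w2 ij(3) by simp
  moreover have "reduced H (drop i (take j es))" by (rule reduced_drop_take[OF r])
  moreover have "drop i (take j es) \<noteq> []" using loop by simp
  ultimately show False using tr unfolding tree_def by blast
qed

definition terminal_edge :: "('v, 'e) sgraph \<Rightarrow> 'e \<Rightarrow> bool" where
  "terminal_edge H t \<longleftrightarrow> t \<in> edges H \<and> org H t \<noteq> tgt H t \<and> {e\<in>edges H. org H e = tgt H t} = {rev H t}"

text \<open>The last edge of a longest reduced walk is terminal; reduced walks in a tree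
  do not repeat edges, so their length is bounded.\<close>
lemma tree_has_terminal_edge:
  assumes sg: "sgraph H" and tr: "tree H" and fin: "finite (edges H)" and ne: "edges H \<noteq> {}"
  shows "\<exists>t. terminal_edge H t"
proof -
  let ?P = "\<lambda>es. \<exists>a b. walk H a es b \<and> reduced H es"
  obtain e0 where e0: "e0 \<in> edges H" using ne by blast
  have P0: "?P [e0]" using e0 sgraph_edgeD(2)[OF sg e0] by (auto simp: reduced_def)
  have bound: "\<forall>es. ?P es \<longrightarrow> length es < card (edges H) + 1"
  proof (intro allI impI)
    fix es assume "?P es"
    then obtain a b where w: "walk H a es b" and "reduced H es" by blast
    then have "length es = card (set es)"
      using tree_reduced_walk_distinct[OF sg tr] distinct_card by metis
    also have "\<dots> \<le> card (edges H)" by (rule card_mono[OF fin walk_edges_subset[OF w]])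
    finally show "length es < card (edges H) + 1" by simp
  qed
  obtain es where es: "?P es" and longest: "\<And>ys. ?P ys \<Longrightarrow> length ys \<le> length es"
    using ex_has_greatest_nat[of ?P "[e0]" length "card (edges H) + 1", OF P0 bound] by blast
  then obtain a b where w: "walk H a es b" and r: "reduced H es" by blast
  have ne_es: "es \<noteq> []" using longest[OF P0] by auto
  define t where "t = last es"
  have t: "t \<in> edges H" using walk_edges_subset[OF w] ne_es by (auto simp: t_def)
  have b: "b = tgt H t"
    using w ne_es walk_append_iff[OF sg, of a "butlast es" "[t]" b] by (auto simp: t_def)
  have loopfree: "org H t \<noteq> tgt H t"
  proof
    assume "org H t = tgt H t"
    then have "[t] \<noteq> [] \<and> walk H (org H t) [t] (org H t) \<and> reduced H [t]"
      using t sgraph_edgeD(2)[OF sg t] by (simp add: reduced_def)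
    then show False using tr unfolding tree_def by blast
  qed
  have "e = rev H t" if e: "e \<in> edges H" "org H e = tgt H t" for e
  proof (rule ccontr)
    assume "e \<noteq> rev H t"
    then have "reduced H (es @ [e])" using reduced_snoc[OF r ne_es] by (simp add: t_def)
    moreover have "walk H a (es @ [e]) (tgt H e)"
      using w e b sgraph_edgeD(2)[OF sg e(1)] walk_append_iff[OF sg] by auto
    ultimately show False using longest[of "es @ [e]"] by auto
  qed
  then have "{e\<in>edges H. org H e = tgt H t} = {rev H t}"
    using sgraph_edgeD(3,6)[OF sg t] by blast
  then show ?thesis using t loopfree unfolding terminal_edge_def by blast
qed

text \<open>Since tgt t is a leaf, a walk entering it along t must leave along rev t at once.\<close>
lemma shortest_walk_avoids_terminal_edge:
  assumes sg: "sgraph H" and t: "terminal_edge H t" and w: "walk H a es b"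
    and shortest: "\<And>ys. walk H a ys b \<Longrightarrow> length es \<le> length ys"
    and a: "a \<noteq> tgt H t" and b: "b \<noteq> tgt H t"
  shows "t \<notin> set es" "rev H t \<notin> set es"
proof -
  have tE: "t \<in> edges H" and leaf: "\<And>e. e \<in> edges H \<Longrightarrow> org H e = tgt H t \<Longrightarrow> e = rev H t"
    using t unfolding terminal_edge_def by blast+
  note SF = sgraph_edgeD[OF sg tE]
  show tnot: "t \<notin> set es"
  proof
    assume "t \<in> set es"
    then obtain xs ys where es: "es = xs @ t # ys" by (meson split_list)
    then obtain m where w1: "walk H a xs m" and m: "m = org H t" and w3: "walk H (tgt H t) ys b"
      using w walk_append_iff[OF sg] by fastforce
    then obtain y zs where ys: "ys = y # zs" using b by (cases ys) auto
    then have "y = rev H t" and w4: "walk H (tgt H y) zs b" using w3 leaf by auto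
    then have "walk H a (xs @ zs) b" using w1 m SF(7) walk_append_iff[OF sg] by auto
    then show False using shortest es ys by fastforce
  qed
  show "rev H t \<notin> set es"
  proof
    assume "rev H t \<in> set es"
    then obtain xs ys where es: "es = xs @ rev H t # ys" by (meson split_list)
    then obtain m where w1: "walk H a xs m" and m: "m = tgt H t"
      using w walk_append_iff[OF sg] SF(6) by fastforce
    then obtain xs' y where xs: "xs = xs' @ [y]" using a by (cases xs rule: rev_exhaust) auto
    then have y: "y \<in> edges H" "tgt H y = tgt H t" using w1 m walk_append_iff[OF sg] by auto
    then have "rev H y = rev H t" using leaf sgraph_edgeD[OF sg y(1)] by auto
    then have "y = t" using sgraph_rev_eq_iff[OF sg y(1) tE] by simp
    then show False using tnot es xs by simp
  qed
qed

lemma tree_remove_terminal_edge: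
  assumes sg: "sgraph H" and tr: "tree H" and t: "terminal_edge H t" and sub: "subgraph H' H"
    and V: "verts H' = verts H - {tgt H t}" and E: "edges H' = edges H - {t, rev H t}"
  shows "tree H'"
proof (rule tree_subgraph[OF sub tr])
  have "verts H' \<noteq> {}" using V t sgraph_edgeD(1)[OF sg] unfolding terminal_edge_def by auto
  moreover have "\<exists>es. walk H' a es b" if a: "a \<in> verts H'" and b: "b \<in> verts H'" for a b
  proof -
    obtain es0 where "walk H a es0 b"
      using a b V tr unfolding tree_def connected_sgraph_def by blast
    then obtain es where w: "walk H a es b" and shortest: "\<And>ys. walk H a ys b \<Longrightarrow> length es \<le> length ys"
      using ex_has_least_nat[of "\<lambda>es. walk H a es b" es0 length] by blast
    have "t \<notin> set es" "rev H t \<notin> set es"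
      using shortest_walk_avoids_terminal_edge[OF sg t w shortest] a b V by auto
    then have "walk H' a es b" using walk_in_subgraph[OF sub w] walk_edges_subset[OF w] E b by auto
    then show ?thesis by blast
  qed
  ultimately show "connected_sgraph H'" unfolding connected_sgraph_def by blast
qed

section \<open>Edge contraction\<close>

definition contract :: "('v, 'e) sgraph \<Rightarrow> 'e \<Rightarrow> ('v, 'e) sgraph" where
  "contract G t = G\<lparr>verts := verts G - {tgt G t}, edges := edges G - {t, rev G t},
      org := (\<lambda>e. if org G e = tgt G t then org G t else org G e),
      tgt := (\<lambda>e. if tgt G e = tgt G t then org G t else tgt G e)\<rparr>"

lemma finite_sgraph_contract:
  assumes fg: "finite_sgraph G" and t: "t \<in> edges G" and uv: "org G t \<noteq> tgt G t"
  shows "finite_sgraph (contract G t)"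
proof -
  have sg: "sgraph G" using fg by (simp add: finite_sgraph_def)
  have "sgraph (contract G t)"
    unfolding sgraph_def
  proof
    fix e assume "e \<in> edges (contract G t)"
    then have e: "e \<in> edges G" "e \<noteq> t" "e \<noteq> rev G t" by (auto simp: contract_def)
    then have "rev G e \<noteq> t" "rev G e \<noteq> rev G t"
      using sgraph_edgeD(3,4)[OF sg] sgraph_rev_eq_iff[OF sg] t by metis+
    then show "org (contract G t) e \<in> verts (contract G t) \<and> tgt (contract G t) e \<in> verts (contract G t) \<and>
        rev (contract G t) e \<in> edges (contract G t) \<and> rev (contract G t) (rev (contract G t) e) = e \<and>
        rev (contract G t) e \<noteq> e \<and> org (contract G t) (rev (contract G t) e) = tgt (contract G t) e"
      using sgraph_edgeD[OF sg e(1)] sgraph_edgeD(1)[OF sg t] uv e by (auto simp: contract_def)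
  qed
  then show ?thesis using fg by (auto simp: finite_sgraph_def contract_def)
qed

text \<open>Pivoting on the unit diagonal entries of the rows of rev t and then t makes
  every edge ending at one endpoint of t inherit the successors at the other endpoint:
  this is exactly the transition matrix of the contracted graph.\<close>
lemma F_graph_contract:
  assumes fg: "finite_sgraph G" and t: "t \<in> edges G" and uv: "org G t \<noteq> tgt G t"
    and f0: "f t = 0" "f (rev G t) = 0"
  shows "F_graph G f = F_graph (contract G t) f"
proof -
  have sg: "sgraph G" and fin: "finite (edges G)" using fg unfolding finite_sgraph_def by auto
  obtain u v s where tuv: "org G t = u" "tgt G t = v" "rev G t = s" "u \<noteq> v" using uv by blast
  define x where "x = (\<lambda>e. exp (- f e))"
  define M where "M = (\<lambda>e e'. (if e = e' then 1 else 0) - edge_matrix G f e e')"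
  define M1 where "M1 = (\<lambda>e j. M e j - M e s * M s j)"
  define M2 where "M2 = (\<lambda>e j. M1 e j - M1 e t * M1 t j)"
  have s: "s \<in> edges G" "s \<noteq> t" "org G s = v" "tgt G s = u" "rev G s = t"
    using sgraph_edgeD[OF sg t] tuv by auto
  have x1: "x t = 1" "x s = 1" using f0 tuv by (auto simp: x_def)
  have M: "M e j = (if e = j then 1 else 0) - (if tgt G e = org G j \<and> j \<noteq> rev G e then x e else 0)" for e j
    by (simp add: M_def edge_matrix_def x_def)
  have contract: "edge_matrix (contract G t) f e j =
      (if (if tgt G e = v then u else tgt G e) = (if org G j = v then u else org G j) \<and> j \<noteq> rev G e
       then x e else 0)" for e j
    by (simp add: edge_matrix_def contract_def x_def tuv)
  have rev_eq: "rev G e = s \<longleftrightarrow> e = t" "rev G e = t \<longleftrightarrow> e = s" if "e \<in> edges G" for e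
    using sgraph_rev_eq_iff[OF sg that t] sgraph_rev_eq_iff[OF sg that s(1)] s(5) tuv by auto
  have Mst: "M s t = 0" "M t s = 0"
    using s tuv by (simp_all add: M)
  have "set_det (edges G) M = set_det (edges G - {s}) M1"
    unfolding M1_def by (rule set_det_pivot) (use fin s tuv in \<open>auto simp: M\<close>)
  also have "\<dots> = set_det (edges G - {s} - {t}) M2"
    unfolding M2_def by (rule set_det_pivot) (use fin s t tuv in \<open>auto simp: M1_def M\<close>)
  also have "\<dots> = set_det (edges G - {s} - {t}) (\<lambda>e j. (if e = j then 1 else 0) - edge_matrix (contract G t) f e j)"
  proof (rule set_det_cong)
    fix e j assume e: "e \<in> edges G - {s} - {t}" and j: "j \<in> edges G - {s} - {t}"
    have rev_org: "org G (rev G e) = tgt G e" using sgraph_edgeD(6)[OF sg] e by auto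
    have M1ej: "M1 e j = M e j - (if tgt G e = v \<and> org G j = u then x e else 0)"
      using e j s x1 rev_eq by (auto simp: M1_def M)
    have M1et: "M1 e t = - (if tgt G e = u then x e else 0)"
      using e rev_eq[of e] tuv(1) unfolding M1_def Mst(1) by (auto simp: M)
    have M1tj: "M1 t j = - (if org G j = v then 1 else 0)"
      using j tuv(2,3) x1(1) unfolding M1_def Mst(2) by (auto simp: M)
    show "M2 e j = (if e = j then 1 else 0) - edge_matrix (contract G t) f e j"
      unfolding M2_def contract M1ej M1et M1tj M
      by (cases "tgt G e = v"; cases "tgt G e = u"; cases "org G j = v"; cases "org G j = u")
         (use rev_org tuv(4) in \<open>simp_all, auto\<close>)
  qed
  finally show ?thesis
    unfolding F_graph_def M_def using tuv by (simp add: contract_def insert_commute Diff_insert2[symmetric])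
qed

section \<open>Collapses\<close>

lemma collapse_edge_cases:
  assumes "collapse G G0 cV cE" "e \<in> edges G"
  shows "case cE e of
      Inl w \<Rightarrow> w \<in> verts G0 \<and> cV (org G e) = w \<and> cV (tgt G e) = w \<and> cE (rev G e) = Inl w
    | Inr f \<Rightarrow> f \<in> edges G0 \<and> cV (org G e) = org G0 f \<and> cV (tgt G e) = tgt G0 f
        \<and> cE (rev G e) = Inr (rev G0 f)"
  using assms unfolding collapse_def by blast

lemma collapse_InlD:
  assumes "collapse G G0 cV cE" "e \<in> edges G" "cE e = Inl w"
  shows "w \<in> verts G0" "cV (org G e) = w" "cV (tgt G e) = w" "cE (rev G e) = Inl w"
  using collapse_edge_cases[OF assms(1,2)] assms(3) by simp_all

lemma collapse_InrD:
  assumes "collapse G G0 cV cE" "e \<in> edges G" "cE e = Inr f"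
  shows "f \<in> edges G0" "cV (org G e) = org G0 f" "cV (tgt G e) = tgt G0 f" "cE (rev G e) = Inr (rev G0 f)"
  using collapse_edge_cases[OF assms(1,2)] assms(3) by simp_all

lemma sgraph_fiber:
  assumes sg: "sgraph G" and col: "collapse G G0 cV cE"
  shows "sgraph (fiber G cV cE w)"
  unfolding sgraph_def
proof
  fix e assume "e \<in> edges (fiber G cV cE w)"
  then have e: "e \<in> edges G" "cE e = Inl w" by (simp_all add: fiber_def)
  show "org (fiber G cV cE w) e \<in> verts (fiber G cV cE w) \<and>
      tgt (fiber G cV cE w) e \<in> verts (fiber G cV cE w) \<and>
      rev (fiber G cV cE w) e \<in> edges (fiber G cV cE w) \<and>
      rev (fiber G cV cE w) (rev (fiber G cV cE w) e) = e \<and>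
      rev (fiber G cV cE w) e \<noteq> e \<and>
      org (fiber G cV cE w) (rev (fiber G cV cE w) e) = tgt (fiber G cV cE w) e"
    using collapse_InlD[OF col e] sgraph_edgeD[OF sg e(1)] by (simp add: fiber_def)
qed

text \<open>Inside the fiber of t this holds because t is terminal, in the other fibers
  because they lie over other vertices of G0.\<close>
lemma collapsed_edge_avoids_terminal_vertex:
  assumes sg: "sgraph G" and col: "collapse G G0 cV cE"
    and t: "terminal_edge (fiber G cV cE w) t"
    and e: "e \<in> edges G - {t, rev G t}" "cE e = Inl w'"
  shows "org G e \<noteq> tgt G t" "tgt G e \<noteq> tgt G t"
proof -
  let ?H = "fiber G cV cE w"
  have tH: "t \<in> edges ?H" and leaf: "{e\<in>edges ?H. org ?H e = tgt ?H t} = {rev ?H t}"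
    using t unfolding terminal_edge_def by blast+
  have tG: "t \<in> edges G" "cE t = Inl w" using tH by (simp_all add: fiber_def)
  have avoid: "org G e' \<noteq> tgt G t" if e': "e' \<in> edges G - {t, rev G t}" "cE e' = Inl w'" for e'
  proof
    assume org: "org G e' = tgt G t"
    have "w' = w"
      using collapse_InlD(2)[OF col _ e'(2)] collapse_InlD(3)[OF col tG] e'(1) org by force
    then have "e' \<in> {e\<in>edges ?H. org ?H e = tgt ?H t}" using e' org by (simp add: fiber_def)
    then have "e' \<in> {rev ?H t}" by (simp only: leaf)
    then have "e' = rev G t" by (simp add: fiber_def)
    then show False using e'(1) by simp
  qed
  show "org G e \<noteq> tgt G t" using avoid[OF e] .
  have "rev G e \<noteq> t" "rev G e \<noteq> rev G t"
    using e(1) sgraph_edgeD(4)[OF sg] sgraph_rev_eq_iff[OF sg _ tG(1)] by force+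
  then have "rev G e \<in> edges G - {t, rev G t}" using e(1) sgraph_edgeD(3)[OF sg] by simp
  then show "tgt G e \<noteq> tgt G t"
    using avoid collapse_InlD(4)[OF col _ e(2)] sgraph_edgeD(6)[OF sg] e(1) by force
qed

lemma subgraph_fiber_contract:
  assumes sg: "sgraph G" and col: "collapse G G0 cV cE" and t: "terminal_edge (fiber G cV cE w) t"
  shows "subgraph (fiber (contract G t) cV cE w') (fiber G cV cE w')"
  unfolding subgraph_def
proof (intro conjI ballI)
  show "verts (fiber (contract G t) cV cE w') \<subseteq> verts (fiber G cV cE w')"
    by (auto simp: fiber_def contract_def)
  fix e assume "e \<in> edges (fiber (contract G t) cV cE w')"
  then have e: "e \<in> edges G - {t, rev G t}" "cE e = Inl w'" by (auto simp: fiber_def contract_def)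
  then show "e \<in> edges (fiber G cV cE w')" by (simp add: fiber_def)
  show "org (fiber (contract G t) cV cE w') e = org (fiber G cV cE w') e"
    "tgt (fiber (contract G t) cV cE w') e = tgt (fiber G cV cE w') e"
    "rev (fiber (contract G t) cV cE w') e = rev (fiber G cV cE w') e"
    using collapsed_edge_avoids_terminal_vertex[OF sg col t e] by (simp_all add: fiber_def contract_def)
qed

lemma tree_fiber_contract:
  assumes sg: "sgraph G" and col: "collapse G G0 cV cE" and t: "terminal_edge (fiber G cV cE w) t"
    and w': "w' \<in> verts G0"
  shows "tree (fiber (contract G t) cV cE w')"
proof -
  have tG: "t \<in> edges G" "cE t = Inl w" using t unfolding terminal_edge_def by (auto simp: fiber_def)
  note tw = collapse_InlD[OF col tG]
  have sub: "subgraph (fiber (contract G t) cV cE w') (fiber G cV cE w')"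
    by (rule subgraph_fiber_contract[OF sg col t])
  have tree: "tree (fiber G cV cE w')" using col w' unfolding collapse_def by blast
  show ?thesis
  proof (cases "w' = w")
    case True
    show ?thesis unfolding True
    proof (rule tree_remove_terminal_edge[OF sgraph_fiber[OF sg col] _ t])
      show "tree (fiber G cV cE w)" using tree True by simp
      show "subgraph (fiber (contract G t) cV cE w) (fiber G cV cE w)" using sub True by simp
      show "verts (fiber (contract G t) cV cE w) = verts (fiber G cV cE w) - {tgt (fiber G cV cE w) t}"
        using tw(3) by (auto simp: fiber_def contract_def)
      show "edges (fiber (contract G t) cV cE w) = edges (fiber G cV cE w) - {t, rev (fiber G cV cE w) t}"
        by (auto simp: fiber_def contract_def)
    qed
  next
    case False
    have "subgraph (fiber G cV cE w') (fiber (contract G t) cV cE w')"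
      using sub False tG(2) tw(3,4) by (auto simp: subgraph_def fiber_def contract_def)
    then show ?thesis by (rule tree_mutual_subgraph[OF sub _ tree])
  qed
qed

lemma collapse_contract:
  assumes sg: "sgraph G" and col: "collapse G G0 cV cE" and t: "terminal_edge (fiber G cV cE w) t"
  shows "collapse (contract G t) G0 cV cE"
proof -
  have tG: "t \<in> edges G" "cE t = Inl w" using t unfolding terminal_edge_def by (auto simp: fiber_def)
  note tw = collapse_InlD[OF col tG]
  let ?G' = "contract G t"
  have ends: "cV (org ?G' e) = cV (org G e)" "cV (tgt ?G' e) = cV (tgt G e)" "rev ?G' = rev G" for e
    using tw(2,3) by (simp_all add: contract_def)
  have E: "edges ?G' = edges G - {t, rev G t}" and V: "verts ?G' \<subseteq> verts G"
    by (auto simp: contract_def)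
  have "\<forall>v\<in>verts ?G'. cV v \<in> verts G0" using col V unfolding collapse_def by blast
  moreover have "\<forall>e\<in>edges ?G'. (case cE e of
      Inl w \<Rightarrow> w \<in> verts G0 \<and> cV (org ?G' e) = w \<and> cV (tgt ?G' e) = w \<and> cE (rev ?G' e) = Inl w
    | Inr f \<Rightarrow> f \<in> edges G0 \<and> cV (org ?G' e) = org G0 f \<and> cV (tgt ?G' e) = tgt G0 f
        \<and> cE (rev ?G' e) = Inr (rev G0 f))"
    unfolding ends E using collapse_edge_cases[OF col] by blast
  moreover have "\<forall>f\<in>edges G0. \<exists>!e. e \<in> edges ?G' \<and> cE e = Inr f"
    using col tG(2) tw(4) unfolding collapse_def E by fastforce
  moreover have "\<forall>w'\<in>verts G0. tree (fiber ?G' cV cE w')"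
    using tree_fiber_contract[OF sg col t] by blast
  ultimately show ?thesis unfolding collapse_def by blast
qed

lemma tree_without_edges_trivial:
  assumes "tree H" "edges H = {}" "x \<in> verts H" "y \<in> verts H"
  shows "x = y"
proof -
  obtain es where w: "walk H x es y"
    using assms(1,3,4) unfolding tree_def connected_sgraph_def by blast
  then have "es = []" using walk_edges_subset[OF w] assms(2) by auto
  then show ?thesis using w by simp
qed

lemma F_graph_iso:
  assumes sg: "sgraph G" and fin: "finite (edges G)" and h: "bij_betw h (edges G) (edges G0)"
    and adj: "\<And>e e'. e \<in> edges G \<Longrightarrow> e' \<in> edges G \<Longrightarrow>
      tgt G e = org G e' \<longleftrightarrow> tgt G0 (h e) = org G0 (h e')"
    and rev: "\<And>e. e \<in> edges G \<Longrightarrow> h (rev G e) = rev G0 (h e)"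
    and f: "\<And>e. e \<in> edges G \<Longrightarrow> f e = l (h e)"
  shows "F_graph G f = F_graph G0 l"
  unfolding F_graph_def
proof (rule set_det_reindex[OF fin h])
  fix e e' assume e: "e \<in> edges G" and e': "e' \<in> edges G"
  have inj: "inj_on h (edges G)" using h by (rule bij_betw_imp_inj_on)
  have "e = e' \<longleftrightarrow> h e = h e'" "e' = rev G e \<longleftrightarrow> h e' = rev G0 (h e)"
    using inj_on_eq_iff[OF inj] e e' sgraph_edgeD(3)[OF sg e] rev[OF e] by metis+
  then show "(if e = e' then 1 else 0) - edge_matrix G f e e' =
      (if h e = h e' then 1 else 0) - edge_matrix G0 l (h e) (h e')"
    unfolding edge_matrix_def using adj[OF e e'] f[OF e] by simp
qed

lemma inj_on_collapse_verts:
  assumes col: "collapse G G0 cV cE" and no_Inl: "\<And>e. e \<in> edges G \<Longrightarrow> \<not> isl (cE e)"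
  shows "inj_on cV (verts G)"
proof (rule inj_onI)
  fix x y assume "x \<in> verts G" "y \<in> verts G" "cV x = cV y"
  then have "x \<in> verts (fiber G cV cE (cV x))" "y \<in> verts (fiber G cV cE (cV x))"
    by (simp_all add: fiber_def)
  moreover have "tree (fiber G cV cE (cV x))"
    using col \<open>x \<in> verts G\<close> unfolding collapse_def by blast
  moreover have "edges (fiber G cV cE (cV x)) = {}" using no_Inl by (force simp: fiber_def)
  ultimately show "x = y" by (rule tree_without_edges_trivial[rotated 2])
qed

lemma F_graph_collapse_iso:
  assumes fg: "finite_sgraph G" and col: "collapse G G0 cV cE"
    and no_Inl: "\<And>e. e \<in> edges G \<Longrightarrow> \<not> isl (cE e)"
  shows "F_graph G (cstar cE l) = F_graph G0 l"
proof -
  have sg: "sgraph G" and fin: "finite (edges G)" using fg by (auto simp: finite_sgraph_def)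
  define h where "h = (\<lambda>e. projr (cE e))"
  have cE: "cE e = Inr (h e)" if "e \<in> edges G" for e
    using no_Inl[OF that] unfolding h_def by (cases "cE e") auto
  have hD: "h e \<in> edges G0" "cV (org G e) = org G0 (h e)" "cV (tgt G e) = tgt G0 (h e)"
      "cE (rev G e) = Inr (rev G0 (h e))" if "e \<in> edges G" for e
    using collapse_InrD[OF col that cE[OF that]] by simp_all
  have unique: "\<exists>!e. e \<in> edges G \<and> cE e = Inr f" if "f \<in> edges G0" for f
    using col that unfolding collapse_def by blast
  have inj_cV: "inj_on cV (verts G)" by (rule inj_on_collapse_verts[OF col no_Inl])
  have "bij_betw h (edges G) (edges G0)"
  proof (rule bij_betw_imageI)
    show "inj_on h (edges G)"
    proof (rule inj_onI)
      fix a b assume a: "a \<in> edges G" and b: "b \<in> edges G" and ab: "h a = h b"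
      have "a \<in> edges G \<and> cE a = Inr (h a)" "b \<in> edges G \<and> cE b = Inr (h a)"
        using a b cE[OF a] cE[OF b] ab by simp_all
      then show "a = b" using unique[OF hD(1)[OF a]] by auto
    qed
    have "f \<in> h ` edges G" if f: "f \<in> edges G0" for f
    proof -
      obtain e where "e \<in> edges G" "cE e = Inr f" using unique[OF f] by blast
      then show ?thesis unfolding h_def by force
    qed
    then show "h ` edges G = edges G0" using hD(1) by blast
  qed
  then show ?thesis
  proof (rule F_graph_iso[OF sg fin])
    fix e e' assume e: "e \<in> edges G" and e': "e' \<in> edges G"
    show "tgt G e = org G e' \<longleftrightarrow> tgt G0 (h e) = org G0 (h e')"
      using hD(2)[OF e'] hD(3)[OF e] inj_on_eq_iff[OF inj_cV sgraph_edgeD(2)[OF sg e] sgraph_edgeD(1)[OF sg e']]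
      by simp
    show "h (rev G e) = rev G0 (h e)" using hD(4)[OF e] by (simp add: h_def)
    show "cstar cE l e = l (h e)" using cE[OF e] by (simp add: cstar_def)
  qed
qed

lemma F_graph_collapse:
  assumes "finite_sgraph G" "collapse G G0 cV cE"
  shows "F_graph G (cstar cE l) = F_graph G0 l"
  using assms
proof (induction "card {e\<in>edges G. isl (cE e)}" arbitrary: G rule: less_induct)
  case less
  have fg: "finite_sgraph G" and col: "collapse G G0 cV cE" by fact+
  have sg: "sgraph G" and fin: "finite (edges G)" using fg by (auto simp: finite_sgraph_def)
  show ?case
  proof (cases "\<exists>e\<in>edges G. isl (cE e)")
    case False
    then show ?thesis using F_graph_collapse_iso[OF fg col] by blast
  next
    case True
    then obtain e0 w where e0: "e0 \<in> edges G" "cE e0 = Inl w" by (metis isl_def)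
    let ?H = "fiber G cV cE w"
    have "tree ?H" using col collapse_InlD(1)[OF col e0] unfolding collapse_def by blast
    moreover have "finite (edges ?H)" "edges ?H \<noteq> {}" using fin e0 by (auto simp: fiber_def)
    ultimately obtain t where t: "terminal_edge ?H t"
      using tree_has_terminal_edge[OF sgraph_fiber[OF sg col]] by blast
    then have tG: "t \<in> edges G" "cE t = Inl w" "org G t \<noteq> tgt G t"
      unfolding terminal_edge_def by (auto simp: fiber_def)
    have "F_graph G (cstar cE l) = F_graph (contract G t) (cstar cE l)"
      using F_graph_contract[OF fg tG(1,3)] collapse_InlD(4)[OF col tG(1,2)] tG(2)
      by (simp add: cstar_def)
    also have "\<dots> = F_graph G0 l"
    proof (rule less.hyps)
      have "{e\<in>edges (contract G t). isl (cE e)} = {e\<in>edges G. isl (cE e)} - {t, rev G t}"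
        by (auto simp: contract_def)
      moreover have "t \<in> {e\<in>edges G. isl (cE e)}" using tG by simp
      ultimately have "{e\<in>edges (contract G t). isl (cE e)} \<subset> {e\<in>edges G. isl (cE e)}"
        by blast
      then show "card {e\<in>edges (contract G t). isl (cE e)} < card {e\<in>edges G. isl (cE e)}"
        by (rule psubset_card_mono[rotated]) (use fin in simp)
      show "finite_sgraph (contract G t)" by (rule finite_sgraph_contract[OF fg tG(1,3)])
      show "collapse (contract G t) G0 cV cE" by (rule collapse_contract[OF sg col t])
    qed
    finally show ?thesis .
  qed
qed

theorem mainTheorem9:
  fixes G :: "('v, 'e) sgraph" and G0 :: "('w, 'f) sgraph"
    and cV :: "'v \<Rightarrow> 'w" and cE :: "'e \<Rightarrow> 'w + 'f" and l :: "'f \<Rightarrow> real"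
  assumes "finite_sgraph G" and "connected_sgraph G"
    and "finite_sgraph G0" and "connected_sgraph G0"
    and "collapse G G0 cV cE"
    and "\<forall>f\<in>edges G0. l f > 0"
    and "\<forall>f\<in>edges G0. l (rev G0 f) = l f"
  shows "F_graph G (cstar cE l) = F_graph G0 l"
  using F_graph_collapse[OF assms(1,5)] .

end
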